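(* Let $H=\varprojlim\langle\{H_n\},\{h^n_k\}_{k<n}\rangle$ be a profinite poset and $\mathbb{P}=\varprojlim\langle\{P_n\},\{p^n_k\}_{k<n}\rangle$ where $\langle\{P_n\},\{p^n_k\}\rangle$ is a Fraïssé sequence in the category of finite posets with quotient maps, and let $f:\mathbb{P}\to H$ be a continuous quotient map. Then there is a continuous, join-preserving quotient map $q:\mathbb{O}(\mathbb{P})\to\mathbb{O}(H)$ such that $q\circ\phi=\psi\circ f$, where $\phi:\mathbb{P}\to\mathbb{O}(\mathbb{P})$ and $\psi:H\to\mathbb{O}(H)$ are given by $(x_n)\mapsto(\downarrow x_n)$.
   Context: A quotient map between posets is a surjective order-preserving map $\phi:A\to B$ such that for all $a\le b$ in $B$ there are $x\le y$ in $A$ with $\phi(x)=a,\phi(y)=b$. A profinite poset is an inverse limit $\{(x_n)\in\prod_nP_n:p^{n+1}_n(x_{n+1})=x_n\ \forall n\}$ of nonempty finite posets $P_n$ with quotient maps $p^m_k:P_m\to P_k$ ($k<m$, $p^k_l\circ p^m_k=p^m_l$), ordered coordinatewise, with the subspace topology of the product of discrete spaces. Fraïssé sequence: (U) for every finite poset $X$ there are $n$ and a quotient map $P_n\to X$; (A) for every $k$, every finite poset $Y$ and quotient map $f:Y\to P_k$ there exist $\ell>k$ and a quotient map $g:P_\ell\to Y$ with $f\circ g=p^\ell_k$. $\downarrow x=\{m:m\le x\}$; $\mathcal{O}(P_n)$ is the set of down-sets of $P_n$ under inclusion; for a quotient map $p:Q\to R$ of finite posets, $\hat p(\emptyset)=\emptyset$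 and $\hat p(A)=\bigcup_i\downarrow p(a_i)$ over the maximal elements $a_i$ of $A$. For such an inverse system with limit $P$, $\mathbb{O}(P):=\{(A_n)\in\prod_n\mathcal{O}(P_n):\widehat{p^{n+1}_n}(A_{n+1})=A_n\ \forall n\}$, ordered coordinatewise by inclusion and topologized as a subspace of $\prod_n\mathcal{O}(P_n)$ with discrete factors; it is a lattice with join $(A_n)\vee(B_n)=(A_n\cup B_n)$. *)

theory Defs
  imports "HOL-Analysis.Analysis"
begin

definition finite_poset :: "'a set \<Rightarrow> ('a \<Rightarrow> 'a \<Rightarrow> bool) \<Rightarrow> bool" where
  "finite_poset X le \<longleftrightarrow> finite X \<and> X \<noteq> {} \<and>
     (\<forall>x\<in>X. le x x) \<and>
     (\<forall>x\<in>X. \<forall>y\<in>X. le x y \<and> le y x \<longrightarrow> x = y) \<and>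
     (\<forall>x\<in>X. \<forall>y\<in>X. \<forall>z\<in>X. le x y \<and> le y z \<longrightarrow> le x z)"

definition poset_quotient ::
  "'a set \<Rightarrow> ('a \<Rightarrow> 'a \<Rightarrow> bool) \<Rightarrow> 'b set \<Rightarrow> ('b \<Rightarrow> 'b \<Rightarrow> bool) \<Rightarrow> ('a \<Rightarrow> 'b) \<Rightarrow> bool" where
  "poset_quotient A leA B leB \<phi> \<longleftrightarrow>
     \<phi> ` A = B \<and>
     (\<forall>x\<in>A. \<forall>y\<in>A. leA x y \<longrightarrow> leB (\<phi> x) (\<phi> y)) \<and>
     (\<forall>a\<in>B. \<forall>b\<in>B. leB a b \<longrightarrow> (\<exists>x\<in>A. \<exists>y\<in>A. leA x y \<and> \<phi> x = a \<and> \<phi> y = b))"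

definition inv_system ::
  "(nat \<Rightarrow> 'a set) \<Rightarrow> (nat \<Rightarrow> 'a \<Rightarrow> 'a \<Rightarrow> bool) \<Rightarrow> (nat \<Rightarrow> nat \<Rightarrow> 'a \<Rightarrow> 'a) \<Rightarrow> bool" where
  "inv_system P le p \<longleftrightarrow>
     (\<forall>n. finite_poset (P n) (le n)) \<and>
     (\<forall>m k. k < m \<longrightarrow> poset_quotient (P m) (le m) (P k) (le k) (p m k)) \<and>
     (\<forall>m k l. l < k \<and> k < m \<longrightarrow> (\<forall>x\<in>P m. p k l (p m k x) = p m l x))"

text \<open>Fraisse sequence. Arbitrary finite posets are represented (up to isomorphism)
  by finite posets with carrier a subset of nat.\<close>

definition fraisse_seq ::
  "(nat \<Rightarrow> 'a set) \<Rightarrow> (nat \<Rightarrow> 'a \<Rightarrow> 'a \<Rightarrow> bool) \<Rightarrow> (nat \<Rightarrow> nat \<Rightarrow> 'a \<Rightarrow> 'a) \<Rightarrow> bool" where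
  "fraisse_seq P le p \<longleftrightarrow>
     inv_system P le p \<and>
     (\<forall>(X::nat set) leX. finite_poset X leX \<longrightarrow>
        (\<exists>n g. poset_quotient (P n) (le n) X leX g)) \<and>
     (\<forall>k (Y::nat set) leY f. finite_poset Y leY \<and> poset_quotient Y leY (P k) (le k) f \<longrightarrow>
        (\<exists>l g. k < l \<and> poset_quotient (P l) (le l) Y leY g \<and>
               (\<forall>x\<in>P l. f (g x) = p l k x)))"

definition inv_limit :: "(nat \<Rightarrow> 'a set) \<Rightarrow> (nat \<Rightarrow> nat \<Rightarrow> 'a \<Rightarrow> 'a) \<Rightarrow> (nat \<Rightarrow> 'a) set" where
  "inv_limit P p = {x. (\<forall>n. x n \<in> P n) \<and> (\<forall>n. p (Suc n) n (x (Suc n)) = x n)}"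

definition lim_le :: "(nat \<Rightarrow> 'a \<Rightarrow> 'a \<Rightarrow> bool) \<Rightarrow> (nat \<Rightarrow> 'a) \<Rightarrow> (nat \<Rightarrow> 'a) \<Rightarrow> bool" where
  "lim_le le x y \<longleftrightarrow> (\<forall>n. le n (x n) (y n))"

definition lim_top :: "(nat \<Rightarrow> 'a set) \<Rightarrow> (nat \<Rightarrow> nat \<Rightarrow> 'a \<Rightarrow> 'a) \<Rightarrow> (nat \<Rightarrow> 'a) topology" where
  "lim_top P p = subtopology (product_topology (\<lambda>n. discrete_topology (P n)) UNIV) (inv_limit P p)"

definition down :: "'a set \<Rightarrow> ('a \<Rightarrow> 'a \<Rightarrow> bool) \<Rightarrow> 'a \<Rightarrow> 'a set" where
  "down X le x = {m \<in> X. le m x}"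

definition downsets :: "'a set \<Rightarrow> ('a \<Rightarrow> 'a \<Rightarrow> bool) \<Rightarrow> 'a set set" where
  "downsets X le = {A. A \<subseteq> X \<and> (\<forall>x\<in>A. \<forall>y\<in>X. le y x \<longrightarrow> y \<in> A)}"

definition maximals :: "('a \<Rightarrow> 'a \<Rightarrow> bool) \<Rightarrow> 'a set \<Rightarrow> 'a set" where
  "maximals le A = {a \<in> A. \<forall>b\<in>A. le a b \<longrightarrow> b = a}"

definition hat :: "('a \<Rightarrow> 'a \<Rightarrow> bool) \<Rightarrow> 'b set \<Rightarrow> ('b \<Rightarrow> 'b \<Rightarrow> bool) \<Rightarrow> ('a \<Rightarrow> 'b) \<Rightarrow> 'a set \<Rightarrow> 'b set" where
  "hat leQ R leR p A = (\<Union>a\<in>maximals leQ A. down R leR (p a))"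

definition Olat :: "(nat \<Rightarrow> 'a set) \<Rightarrow> (nat \<Rightarrow> 'a \<Rightarrow> 'a \<Rightarrow> bool) \<Rightarrow> (nat \<Rightarrow> nat \<Rightarrow> 'a \<Rightarrow> 'a) \<Rightarrow> (nat \<Rightarrow> 'a set) set" where
  "Olat P le p = {A. (\<forall>n. A n \<in> downsets (P n) (le n)) \<and>
      (\<forall>n. hat (le (Suc n)) (P n) (le n) (p (Suc n) n) (A (Suc n)) = A n)}"

definition Olat_le :: "(nat \<Rightarrow> 'a set) \<Rightarrow> (nat \<Rightarrow> 'a set) \<Rightarrow> bool" where
  "Olat_le A B \<longleftrightarrow> (\<forall>n. A n \<subseteq> B n)"

definition Olat_top :: "(nat \<Rightarrow> 'a set) \<Rightarrow> (nat \<Rightarrow> 'a \<Rightarrow> 'a \<Rightarrow> bool) \<Rightarrow> (nat \<Rightarrow> nat \<Rightarrow> 'a \<Rightarrow> 'a) \<Rightarrow> (nat \<Rightarrow> 'a set) topology" where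
  "Olat_top P le p = subtopology (product_topology (\<lambda>n. discrete_topology (downsets (P n) (le n))) UNIV) (Olat P le p)"

definition down_map :: "(nat \<Rightarrow> 'a set) \<Rightarrow> (nat \<Rightarrow> 'a \<Rightarrow> 'a \<Rightarrow> bool) \<Rightarrow> (nat \<Rightarrow> 'a) \<Rightarrow> (nat \<Rightarrow> 'a set)" where
  "down_map P le x = (\<lambda>n. down (P n) (le n) (x n))"

end

theory Submission
  imports Defs
begin

text \<open>An element \<open>(A\<^sub>n)\<close> of \<open>\<bbbO>(P)\<close> corresponds to the closed down-set of threads
  running through it, and conversely a closed down-set \<open>S\<close> of the limit is recovered from its
  levelwise shadow \<open>{b. \<exists>y\<in>S. b \<le> y\<^sub>n}\<close>; Koenig's lemma for inverse sequences of nonempty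
  finite sets makes both directions work. Under this correspondence \<open>q\<close> sends \<open>C\<close> to the
  down-closure of \<open>f[C]\<close>: it preserves unions, sends \<open>\<down>x\<close> to \<open>\<down>f(x)\<close> since \<open>f\<close> is
  monotone, and is onto because \<open>f\<^sup>-\<^sup>1[D]\<close> is a closed down-set mapped onto \<open>D\<close> by the
  surjective \<open>f\<close>. Continuity comes from compactness: \<open>f\<close> is uniformly continuous, so level
  \<open>n\<close> of \<open>q A\<close> only depends on the threads through level \<open>m\<close> for some \<open>m\<close>; lifting
  order relations of a level to threads shows that this dependence is through \<open>A\<^sub>m\<close>
  alone.\<close>

section \<open>Koenig's lemma for inverse sequences\<close>

lemma decseq_finite_nonempty_common_point:
  fixes F :: "nat \<Rightarrow> 'c set"
  assumes dec: "\<And>d. F (Suc d) \<subseteq> F d" and ne: "\<And>d. F d \<noteq> {}" and fin: "finite (F 0)"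
  shows "\<exists>c. \<forall>d. c \<in> F d"
proof -
  have antimono: "d \<le> d' \<Longrightarrow> F d' \<subseteq> F d" for d d'
    by (rule lift_Suc_antimono_le[of F, OF dec])
  have finF: "finite (F d)" for d
    using antimono[of 0 d] fin finite_subset by blast
  define d0 where "d0 = (ARG_MIN (\<lambda>d. card (F d)) d. True)"
  have d0: "card (F d0) \<le> card (F d)" for d
    unfolding d0_def by (rule arg_min_nat_le) simp
  have stable: "F d = F d0" if "d0 \<le> d" for d
    using card_subset_eq[OF finF[of d0] antimono[OF that]] card_mono[OF finF[of d0] antimono[OF that]] d0[of d]
    by simp
  obtain c where "c \<in> F d0" using ne by blast
  then have "c \<in> F d" for d
    using stable[of d] antimono[of d d0] by (cases "d0 \<le> d") auto
  then show ?thesis by blast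
qed

fun bonds_from :: "(nat \<Rightarrow> 'c \<Rightarrow> 'c) \<Rightarrow> nat \<Rightarrow> nat \<Rightarrow> 'c \<Rightarrow> 'c" where
  "bonds_from r k 0 c = c"
| "bonds_from r k (Suc d) c = r k (bonds_from r (Suc k) d c)"

lemma bonds_from_Suc': "bonds_from r k (Suc d) c = bonds_from r k d (r (k + d) c)"
  by (induction d arbitrary: k) auto

text \<open>The eventual images
  \<open>T k = \<Inter>d. (r k \<circ> \<dots> \<circ> r (k+d-1)) ` Q (k+d)\<close> are nonempty, and every point of
  \<open>T k\<close> has a preimage in \<open>T (Suc k)\<close>.\<close>

lemma inverse_sequence_limit_nonempty:
  fixes Q :: "nat \<Rightarrow> 'c set" and r :: "nat \<Rightarrow> 'c \<Rightarrow> 'c"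
  assumes fin: "\<And>k. finite (Q k)" and ne: "\<And>k. Q k \<noteq> {}"
    and bond: "\<And>k c. c \<in> Q (Suc k) \<Longrightarrow> r k c \<in> Q k"
  shows "\<exists>x. \<forall>k. x k \<in> Q k \<and> r k (x (Suc k)) = x k"
proof -
  define F where "F k d = bonds_from r k d ` Q (k + d)" for k d
  have F_dec: "F k (Suc d) \<subseteq> F k d" for k d
    unfolding F_def by (auto simp del: bonds_from.simps simp: bonds_from_Suc' bond)
  have F_ne: "F k d \<noteq> {}" for k d
    unfolding F_def using ne by auto
  have F_0: "F k 0 = Q k" for k
    unfolding F_def by simp
  define T where "T k = (\<Inter>d. F k d)" for k
  have T_ne: "\<exists>c. c \<in> T k" for k
    using decseq_finite_nonempty_common_point[of "F k", OF F_dec F_ne] F_0 fin unfolding T_def by simp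
  have T_sub: "T k \<subseteq> Q k" for k
    unfolding T_def using F_0 by blast
  have T_preimage: "\<exists>c'. c' \<in> T (Suc k) \<and> r k c' = c" if c: "c \<in> T k" for k c
  proof -
    define L where "L d = {c' \<in> F (Suc k) d. r k c' = c}" for d
    have "L (Suc d) \<subseteq> L d" for d
      unfolding L_def using F_dec by auto
    moreover have "L d \<noteq> {}" for d
    proof -
      have "c \<in> F k (Suc d)" using c unfolding T_def by blast
      then show ?thesis unfolding L_def F_def by auto
    qed
    moreover have "finite (L 0)"
      unfolding L_def F_0 using fin by auto
    ultimately obtain c' where "\<forall>d. c' \<in> L d"
      using decseq_finite_nonempty_common_point[of L] by blast
    then show ?thesis unfolding L_def T_def by auto
  qed
  have "\<exists>x. \<forall>k. x k \<in> T k \<and> r k (x (Suc k)) = x k"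
  proof (rule dependent_nat_choice)
    show "\<exists>c. c \<in> T 0" by (rule T_ne)
  qed (rule T_preimage)
  then show ?thesis using T_sub by blast
qed

locale finite_poset_system =
  fixes P :: "nat \<Rightarrow> 'a set" and le :: "nat \<Rightarrow> 'a \<Rightarrow> 'a \<Rightarrow> bool" and p :: "nat \<Rightarrow> nat \<Rightarrow> 'a \<Rightarrow> 'a"
  assumes inv_system: "inv_system P le p"
begin

lemma finite_poset_level: "finite_poset (P n) (le n)"
  using inv_system unfolding inv_system_def by blast

lemma finite_level: "finite (P n)"
  using finite_poset_level unfolding finite_poset_def by blast

lemma le_refl: "x \<in> P n \<Longrightarrow> le n x x"
  using finite_poset_level unfolding finite_poset_def by blast

lemma le_antisym: "x \<in> P n \<Longrightarrow> y \<in> P n \<Longrightarrow> le n x y \<Longrightarrow> le n y x \<Longrightarrow> x = y"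
  using finite_poset_level unfolding finite_poset_def by blast

lemma le_trans: "x \<in> P n \<Longrightarrow> y \<in> P n \<Longrightarrow> z \<in> P n \<Longrightarrow> le n x y \<Longrightarrow> le n y z \<Longrightarrow> le n x z"
  using finite_poset_level[of n] unfolding finite_poset_def by blast

lemma bond_quotient: "k < m \<Longrightarrow> poset_quotient (P m) (le m) (P k) (le k) (p m k)"
  using inv_system unfolding inv_system_def by blast

lemma bond_bond: "l < k \<Longrightarrow> k < m \<Longrightarrow> x \<in> P m \<Longrightarrow> p k l (p m k x) = p m l x"
  using inv_system unfolding inv_system_def by blast

lemma bond_mem: "k < m \<Longrightarrow> x \<in> P m \<Longrightarrow> p m k x \<in> P k"
  using bond_quotient[of k m] unfolding poset_quotient_def by blast

definition proj :: "nat \<Rightarrow> nat \<Rightarrow> 'a \<Rightarrow> 'a" where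
  "proj m k x = (if k < m then p m k x else x)"

lemma proj_self [simp]: "proj m m x = x"
  unfolding proj_def by simp

lemma proj_Suc_self [simp]: "proj (Suc n) n = p (Suc n) n"
  unfolding proj_def by auto

lemma proj_mem: "x \<in> P m \<Longrightarrow> k \<le> m \<Longrightarrow> proj m k x \<in> P k"
  using bond_mem unfolding proj_def by auto

lemma proj_mono: "x \<in> P m \<Longrightarrow> y \<in> P m \<Longrightarrow> le m x y \<Longrightarrow> k \<le> m \<Longrightarrow> le k (proj m k x) (proj m k y)"
  using bond_quotient[of k m] unfolding proj_def poset_quotient_def by (cases "k < m") auto

lemma proj_lift_le:
  assumes "a \<in> P k" "b \<in> P k" "le k a b" "k \<le> m"
  shows "\<exists>x\<in>P m. \<exists>y\<in>P m. le m x y \<and> proj m k x = a \<and> proj m k y = b"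
proof (cases "k < m")
  case True
  then show ?thesis using assms bond_quotient[OF True] unfolding proj_def poset_quotient_def by auto
qed (use assms in \<open>auto simp: proj_def\<close>)

lemma proj_proj: "l \<le> k \<Longrightarrow> k \<le> m \<Longrightarrow> x \<in> P m \<Longrightarrow> proj k l (proj m k x) = proj m l x"
  using bond_bond[of l k m x] unfolding proj_def by (cases "l = k"; cases "k = m") auto

lemma proj_Suc: "c \<in> P (Suc j) \<Longrightarrow> m \<le> j \<Longrightarrow> proj (Suc j) m c = proj j m (p (Suc j) j c)"
  using proj_proj[of m j "Suc j" c] by simp

abbreviation lim :: "(nat \<Rightarrow> 'a) set" where
  "lim \<equiv> inv_limit P p"

lemma limit_mem: "x \<in> lim \<Longrightarrow> x n \<in> P n"
  unfolding inv_limit_def by blast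

lemma limit_bond: "x \<in> lim \<Longrightarrow> p (Suc n) n (x (Suc n)) = x n"
  unfolding inv_limit_def by blast

lemma limit_proj: "x \<in> lim \<Longrightarrow> k \<le> m \<Longrightarrow> proj m k (x m) = x k"
proof (induction m)
  case (Suc m)
  show ?case
  proof (cases "k = Suc m")
    case False
    then have "k \<le> m" using Suc by simp
    then show ?thesis
      using proj_Suc[OF limit_mem[OF Suc(2)]] limit_bond[OF Suc(2)] Suc.IH[OF Suc(2)] by simp
  qed simp
qed simp

lemma thread_from_level:
  assumes y_mem: "\<And>k. y k \<in> P (m + k)" and y_bond: "\<And>k. p (Suc (m + k)) (m + k) (y (Suc k)) = y k"
  shows "\<exists>x\<in>lim. \<forall>k. x (m + k) = y k"
proof -
  define x where "x n = (if m \<le> n then y (n - m) else proj m n (y 0))" for n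
  have "x n \<in> P n" for n
    unfolding x_def using y_mem[of "n - m"] proj_mem[OF y_mem[of 0], of n] by auto
  moreover have "p (Suc n) n (x (Suc n)) = x n" for n
  proof (cases "m \<le> n")
    case True
    then have "Suc n - m = Suc (n - m)" "m + (n - m) = n" by auto
    then show ?thesis unfolding x_def using True y_bond[of "n - m"] by simp
  next
    case False
    then show ?thesis
      unfolding x_def using proj_proj[of n "Suc n" m "y 0"] y_mem[of 0] by (auto simp: proj_def)
  qed
  ultimately have "x \<in> lim" unfolding inv_limit_def by blast
  moreover have "x (m + k) = y k" for k unfolding x_def by simp
  ultimately show ?thesis by blast
qed

lemma limit_point_from_level:
  assumes Q_sub: "\<And>k. Q k \<subseteq> P (m + k)" and Q_ne: "\<And>k. Q k \<noteq> {}"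
    and Q_bond: "\<And>k c. c \<in> Q (Suc k) \<Longrightarrow> p (Suc (m + k)) (m + k) c \<in> Q k"
  shows "\<exists>x\<in>lim. \<forall>k. x (m + k) \<in> Q k"
proof -
  have "finite (Q k)" for k using Q_sub finite_level finite_subset by blast
  then obtain y where y: "\<And>k. y k \<in> Q k" "\<And>k. p (Suc (m + k)) (m + k) (y (Suc k)) = y k"
    using inverse_sequence_limit_nonempty[of Q "\<lambda>k. p (Suc (m + k)) (m + k)"] Q_ne Q_bond by blast
  moreover obtain x where x: "x \<in> lim" "\<And>k. x (m + k) = y k"
    using thread_from_level[of y m] y Q_sub by blast
  ultimately show ?thesis by (intro bexI[OF _ x(1)]) simp
qed

lemma limit_pair_from_level:
  assumes Q_sub: "\<And>k. Q k \<subseteq> P (m + k) \<times> P (m + k)" and Q_ne: "\<And>k. Q k \<noteq> {}"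
    and Q_bond: "\<And>k c d. (c, d) \<in> Q (Suc k) \<Longrightarrow> (p (Suc (m + k)) (m + k) c, p (Suc (m + k)) (m + k) d) \<in> Q k"
  shows "\<exists>x\<in>lim. \<exists>y\<in>lim. \<forall>k. (x (m + k), y (m + k)) \<in> Q k"
proof -
  let ?r = "\<lambda>k. map_prod (p (Suc (m + k)) (m + k)) (p (Suc (m + k)) (m + k))"
  have "finite (Q k)" for k
    by (rule finite_subset[OF Q_sub]) (simp add: finite_level)
  moreover have "?r k c \<in> Q k" if "c \<in> Q (Suc k)" for k c
    using Q_bond[of "fst c" "snd c" k] that by (cases c) simp
  ultimately obtain z where z: "\<And>k. z k \<in> Q k" "\<And>k. ?r k (z (Suc k)) = z k"
    using inverse_sequence_limit_nonempty[of Q ?r] Q_ne by blast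
  have "z k \<in> P (m + k) \<times> P (m + k)" for k
    using Q_sub z(1) by blast
  then have "fst (z k) \<in> P (m + k)" "snd (z k) \<in> P (m + k)" for k
    by (simp_all add: mem_Times_iff)
  moreover have "p (Suc (m + k)) (m + k) (fst (z (Suc k))) = fst (z k)"
    "p (Suc (m + k)) (m + k) (snd (z (Suc k))) = snd (z k)" for k
    using arg_cong[OF z(2)[of k], of fst] arg_cong[OF z(2)[of k], of snd] by auto
  ultimately obtain x y where x: "x \<in> lim" "\<forall>k. x (m + k) = fst (z k)"
    and y: "y \<in> lim" "\<forall>k. y (m + k) = snd (z k)"
    using thread_from_level[of "\<lambda>k. fst (z k)" m] thread_from_level[of "\<lambda>k. snd (z k)" m] by blast
  have "(x (m + k), y (m + k)) \<in> Q k" for k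
    using x(2) y(2) z(1) by simp
  then show ?thesis using x(1) y(1) by blast
qed

lemma limit_le_through:
  assumes a: "a \<in> P m" and b: "b \<in> P m" and ab: "le m a b"
  shows "\<exists>x\<in>lim. \<exists>y\<in>lim. x m = a \<and> y m = b \<and> lim_le le x y"
proof -
  define Q where "Q k = {(c, d). c \<in> P (m + k) \<and> d \<in> P (m + k) \<and> le (m + k) c d \<and>
    proj (m + k) m c = a \<and> proj (m + k) m d = b}" for k
  have "Q k \<subseteq> P (m + k) \<times> P (m + k)" for k
    unfolding Q_def by auto
  moreover have "Q k \<noteq> {}" for k
    using proj_lift_le[OF a b ab, of "m + k"] unfolding Q_def by auto
  moreover have "(p (Suc (m + k)) (m + k) c, p (Suc (m + k)) (m + k) d) \<in> Q k"
    if "(c, d) \<in> Q (Suc k)" for k c d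
    using that proj_mono[of c "Suc (m + k)" d "m + k"] proj_mem[of _ "Suc (m + k)" "m + k"]
      proj_Suc[of c "m + k" m] proj_Suc[of d "m + k" m]
    unfolding Q_def by auto
  ultimately obtain x y where xy: "x \<in> lim" "y \<in> lim" "\<forall>k. (x (m + k), y (m + k)) \<in> Q k"
    using limit_pair_from_level[of Q m] by blast
  have "(x (m + 0), y (m + 0)) \<in> Q 0"
    using xy(3) by blast
  then have xy_m: "x m = a" "y m = b"
    unfolding Q_def by simp_all
  have "le n (x n) (y n)" for n
  proof (cases "m \<le> n")
    case True
    then obtain k where "n = m + k" using le_Suc_ex by blast
    then show ?thesis using xy(3) unfolding Q_def by auto
  next
    case False
    then show ?thesis
      using proj_mono[OF a b ab, of n] xy_m limit_proj[OF xy(1), of n m] limit_proj[OF xy(2), of n m] by simp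
  qed
  then show ?thesis using xy(1,2) xy_m unfolding lim_le_def by blast
qed

end

section \<open>Elements of \<open>\<bbbO>\<close> as closed down-sets of the limit\<close>

definition threads :: "(nat \<Rightarrow> 'a set) \<Rightarrow> (nat \<Rightarrow> nat \<Rightarrow> 'a \<Rightarrow> 'a) \<Rightarrow> (nat \<Rightarrow> 'a set) \<Rightarrow> (nat \<Rightarrow> 'a) set" where
  "threads P p A = {x \<in> inv_limit P p. \<forall>k. x k \<in> A k}"

definition shadow :: "(nat \<Rightarrow> 'a set) \<Rightarrow> (nat \<Rightarrow> 'a \<Rightarrow> 'a \<Rightarrow> bool) \<Rightarrow> (nat \<Rightarrow> 'a) set \<Rightarrow> nat \<Rightarrow> 'a set" where
  "shadow P le S n = {b \<in> P n. \<exists>y\<in>S. le n b (y n)}"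

lemma threads_mono: "(\<And>n. A n \<subseteq> B n) \<Longrightarrow> threads P p A \<subseteq> threads P p B"
  unfolding threads_def by blast

lemma shadow_mono: "S \<subseteq> T \<Longrightarrow> shadow P le S n \<subseteq> shadow P le T n"
  unfolding shadow_def by blast

context finite_poset_system
begin

lemma exists_maximal_above:
  assumes X_sub: "X \<subseteq> P n" and c: "c \<in> X"
  shows "\<exists>d\<in>maximals (le n) X. le n c d"
proof -
  define D where "D d = {e \<in> X. le n e d}" for d
  have "finite (D ` X)" using X_sub finite_level finite_subset by blast
  then obtain d where dX: "d \<in> X" and cd: "D c \<subseteq> D d" and d_max: "\<And>e. e \<in> X \<Longrightarrow> D d \<subseteq> D e \<Longrightarrow> D d = D e"
    using finite_has_maximal2[of "D ` X" "D c"] c by auto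
  have "le n c d" using cd c le_refl X_sub unfolding D_def by blast
  moreover have "b = d" if bX: "b \<in> X" and db: "le n d b" for b
  proof -
    have "D d \<subseteq> D b" unfolding D_def using le_trans db X_sub bX dX by blast
    then have "b \<in> D d" using d_max[OF bX] bX le_refl X_sub unfolding D_def by blast
    then show "b = d" using le_antisym db X_sub bX dX unfolding D_def by blast
  qed
  ultimately show ?thesis using dX unfolding maximals_def by blast
qed

lemma hat_Suc_eq:
  assumes X_sub: "X \<subseteq> P (Suc n)"
  shows "hat (le (Suc n)) (P n) (le n) (p (Suc n) n) X = {b \<in> P n. \<exists>c\<in>X. le n b (p (Suc n) n c)}"
proof
  show "hat (le (Suc n)) (P n) (le n) (p (Suc n) n) X \<subseteq> {b \<in> P n. \<exists>c\<in>X. le n b (p (Suc n) n c)}"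
    unfolding hat_def down_def maximals_def by blast
next
  show "{b \<in> P n. \<exists>c\<in>X. le n b (p (Suc n) n c)} \<subseteq> hat (le (Suc n)) (P n) (le n) (p (Suc n) n) X"
  proof clarify
    fix b c assume bP: "b \<in> P n" and cX: "c \<in> X" and bc: "le n b (p (Suc n) n c)"
    obtain d where d: "d \<in> maximals (le (Suc n)) X" "le (Suc n) c d"
      using exists_maximal_above[OF X_sub cX] by blast
    have cP: "c \<in> P (Suc n)" and dP: "d \<in> P (Suc n)"
      using cX d(1) X_sub unfolding maximals_def by auto
    have "le n (p (Suc n) n c) (p (Suc n) n d)"
      using proj_mono[OF cP dP d(2), of n] by simp
    then have "le n b (p (Suc n) n d)"
      using le_trans[OF bP bond_mem[OF lessI cP] bond_mem[OF lessI dP] bc] by simp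
    then show "b \<in> hat (le (Suc n)) (P n) (le n) (p (Suc n) n) X"
      unfolding hat_def down_def using d(1) bP by blast
  qed
qed

lemma Olat_downset: "A \<in> Olat P le p \<Longrightarrow> A n \<in> downsets (P n) (le n)"
  unfolding Olat_def by blast

lemma Olat_subset: "A \<in> Olat P le p \<Longrightarrow> A n \<subseteq> P n"
  using Olat_downset unfolding downsets_def by blast

lemma Olat_down_closed: "A \<in> Olat P le p \<Longrightarrow> b \<in> A n \<Longrightarrow> a \<in> P n \<Longrightarrow> le n a b \<Longrightarrow> a \<in> A n"
  using Olat_downset[of A n] unfolding downsets_def by blast

lemma Olat_Suc: "A \<in> Olat P le p \<Longrightarrow> A n = {b \<in> P n. \<exists>c\<in>A (Suc n). le n b (p (Suc n) n c)}"
  using hat_Suc_eq[OF Olat_subset] unfolding Olat_def by blast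

lemma Olat_bond_mem:
  assumes A: "A \<in> Olat P le p" and c: "c \<in> A (Suc n)"
  shows "p (Suc n) n c \<in> A n"
proof -
  have "p (Suc n) n c \<in> P n" using bond_mem Olat_subset[OF A] c by blast
  then show ?thesis using Olat_Suc[OF A, of n] c le_refl by blast
qed

lemma Olat_limit_mem: "A \<in> Olat P le p \<Longrightarrow> x \<in> lim \<Longrightarrow> x m \<in> A m \<Longrightarrow> k \<le> m \<Longrightarrow> x k \<in> A k"
proof (induction m)
  case (Suc m)
  then show ?case
    using Olat_bond_mem[OF Suc(2,4)] limit_bond[OF Suc(3), of m] by (cases "k = Suc m") auto
qed simp

lemma Olat_threads_above:
  assumes A: "A \<in> Olat P le p" and a: "a \<in> A m"
  shows "\<exists>x\<in>threads P p A. le m a (x m)"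
proof -
  have aP: "a \<in> P m" using Olat_subset[OF A] a by blast
  define Q where "Q k = {c \<in> A (m + k). le m a (proj (m + k) m c)}" for k
  have "Q k \<subseteq> P (m + k)" for k
    unfolding Q_def using Olat_subset[OF A] by blast
  moreover have "Q k \<noteq> {}" for k
  proof (induction k)
    case 0
    then show ?case unfolding Q_def using a le_refl[OF aP] by auto
  next
    case (Suc k)
    then obtain c where c: "c \<in> A (m + k)" "le m a (proj (m + k) m c)"
      unfolding Q_def by blast
    then obtain c' where c': "c' \<in> A (Suc (m + k))" "le (m + k) c (p (Suc (m + k)) (m + k) c')"
      using Olat_Suc[OF A, of "m + k"] by blast
    have cP: "c \<in> P (m + k)" and c'P: "c' \<in> P (Suc (m + k))"
      using c(1) c'(1) Olat_subset[OF A] by blast+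
    have pc'P: "p (Suc (m + k)) (m + k) c' \<in> P (m + k)"
      using bond_mem[OF lessI c'P] .
    have "le m (proj (m + k) m c) (proj (Suc (m + k)) m c')"
      using proj_mono[OF cP pc'P c'(2), of m] proj_Suc[OF c'P, of m] by simp
    then have "le m a (proj (Suc (m + k)) m c')"
      using le_trans[OF aP proj_mem[OF cP] proj_mem[OF c'P] c(2)] by simp
    then show ?case unfolding Q_def using c'(1) by auto
  qed
  moreover have "p (Suc (m + k)) (m + k) c \<in> Q k" if "c \<in> Q (Suc k)" for k c
  proof -
    have cA: "c \<in> A (Suc (m + k))" and ac: "le m a (proj (Suc (m + k)) m c)"
      using that unfolding Q_def by auto
    have "c \<in> P (Suc (m + k))" using cA Olat_subset[OF A] by blast
    then show ?thesis
      using Olat_bond_mem[OF A cA] proj_Suc[of c "m + k" m] ac unfolding Q_def by auto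
  qed
  ultimately obtain x where x: "x \<in> lim" "\<forall>k. x (m + k) \<in> Q k"
    using limit_point_from_level[of Q m] by blast
  then have "x (m + 0) \<in> Q 0" by blast
  then have xm: "x m \<in> A m" "le m a (x m)" unfolding Q_def by auto
  have "x n \<in> A n" for n
  proof (cases "m \<le> n")
    case True
    then obtain k where "n = m + k" using le_Suc_ex by blast
    then show ?thesis using x(2) unfolding Q_def by auto
  qed (use Olat_limit_mem[OF A x(1) xm(1)] in simp)
  then show ?thesis using x(1) xm(2) unfolding threads_def by blast
qed

lemma shadow_in_Olat:
  assumes S: "S \<subseteq> lim"
  shows "shadow P le S \<in> Olat P le p"
proof -
  have "shadow P le S n \<in> downsets (P n) (le n)" for n
    unfolding downsets_def shadow_def using S limit_mem le_trans by blast
  moreover have "{b \<in> P n. \<exists>c\<in>shadow P le S (Suc n). le n b (p (Suc n) n c)} = shadow P le S n" for n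
  proof (intro equalityI subsetI)
    fix b assume "b \<in> {b \<in> P n. \<exists>c\<in>shadow P le S (Suc n). le n b (p (Suc n) n c)}"
    then obtain c y where bP: "b \<in> P n" and bc: "le n b (p (Suc n) n c)"
      and cP: "c \<in> P (Suc n)" and y: "y \<in> S" "le (Suc n) c (y (Suc n))"
      unfolding shadow_def by blast
    have yl: "y \<in> lim" using S y(1) by blast
    have "le n (p (Suc n) n c) (y n)"
      using proj_mono[OF cP limit_mem[OF yl] y(2), of n] limit_bond[OF yl, of n] by simp
    then have "le n b (y n)"
      using le_trans[OF bP bond_mem[OF lessI cP] limit_mem[OF yl] bc] by simp
    then show "b \<in> shadow P le S n" unfolding shadow_def using bP y(1) by blast
  next
    fix b assume "b \<in> shadow P le S n"
    then obtain y where bP: "b \<in> P n" and y: "y \<in> S" "le n b (y n)"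
      unfolding shadow_def by blast
    have yl: "y \<in> lim" using S y(1) by blast
    have "y (Suc n) \<in> shadow P le S (Suc n)"
      unfolding shadow_def using y(1) limit_mem[OF yl] le_refl[OF limit_mem[OF yl]] by blast
    moreover have "le n b (p (Suc n) n (y (Suc n)))" using y(2) limit_bond[OF yl, of n] by simp
    ultimately show "b \<in> {b \<in> P n. \<exists>c\<in>shadow P le S (Suc n). le n b (p (Suc n) n c)}"
      using bP by blast
  qed
  moreover have "shadow P le S (Suc n) \<subseteq> P (Suc n)" for n
    unfolding shadow_def by blast
  ultimately show ?thesis unfolding Olat_def using hat_Suc_eq by simp
qed

lemma shadow_threads:
  assumes A: "A \<in> Olat P le p"
  shows "shadow P le (threads P p A) = A"
proof (intro ext equalityI subsetI)
  fix n b assume "b \<in> shadow P le (threads P p A) n"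
  then show "b \<in> A n"
    unfolding shadow_def threads_def using Olat_down_closed[OF A] by blast
next
  fix n b assume b: "b \<in> A n"
  then show "b \<in> shadow P le (threads P p A) n"
    unfolding shadow_def using Olat_threads_above[OF A b] Olat_subset[OF A] by blast
qed

text \<open>Hypothesis \<open>closed\<close> says that \<open>S\<close> is closed in the limit topology.\<close>

lemma threads_shadow:
  assumes S: "S \<subseteq> lim"
    and down_closed: "\<And>z y. z \<in> lim \<Longrightarrow> y \<in> S \<Longrightarrow> lim_le le z y \<Longrightarrow> z \<in> S"
    and closed: "\<And>z. z \<in> lim \<Longrightarrow> (\<And>m. \<exists>y\<in>S. y m = z m) \<Longrightarrow> z \<in> S"
  shows "threads P p (shadow P le S) = S"
proof (intro equalityI subsetI)
  fix z assume "z \<in> S"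
  then show "z \<in> threads P p (shadow P le S)"
    unfolding threads_def shadow_def using S limit_mem le_refl by blast
next
  fix z assume "z \<in> threads P p (shadow P le S)"
  then have zl: "z \<in> lim" and z_shadow: "\<And>k. z k \<in> shadow P le S k"
    unfolding threads_def by blast+
  define Q where "Q k = {c \<in> P k. (\<exists>y\<in>S. y k = c) \<and> le k (z k) c}" for k
  have "Q k \<subseteq> P (0 + k)" for k
    unfolding Q_def by auto
  moreover have "Q k \<noteq> {}" for k
    using z_shadow[of k] S limit_mem unfolding Q_def shadow_def by blast
  moreover have "p (Suc (0 + k)) (0 + k) c \<in> Q k" if "c \<in> Q (Suc k)" for k c
  proof -
    have "\<exists>y\<in>S. y (Suc k) = c" and zc: "le (Suc k) (z (Suc k)) c"
      using that unfolding Q_def by auto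
    then obtain y where y: "y \<in> S" "y (Suc k) = c" by blast
    have yl: "y \<in> lim" using S y(1) by blast
    have "le k (z k) (y k)"
      using proj_mono[OF limit_mem[OF zl] limit_mem[OF yl] zc[folded y(2)], of k]
        limit_bond[OF zl, of k] limit_bond[OF yl, of k] by simp
    then show ?thesis unfolding Q_def using y limit_bond[OF yl, of k] limit_mem[OF yl, of k] by auto
  qed
  ultimately obtain w where w: "w \<in> lim" "\<forall>k. w (0 + k) \<in> Q k"
    using limit_point_from_level[of Q 0] by blast
  then have "w \<in> S"
    using closed unfolding Q_def by auto
  moreover have "lim_le le z w"
    unfolding lim_le_def using w(2) unfolding Q_def by auto
  ultimately show "z \<in> S" using down_closed[OF zl] by blast
qed

lemma threads_Un:
  assumes A: "A \<in> Olat P le p" and B: "B \<in> Olat P le p"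
  shows "threads P p (\<lambda>n. A n \<union> B n) = threads P p A \<union> threads P p B"
proof (intro equalityI subsetI)
  fix x assume "x \<in> threads P p (\<lambda>n. A n \<union> B n)"
  then have xl: "x \<in> lim" and xAB: "\<And>k. x k \<in> A k \<union> B k" unfolding threads_def by simp_all
  show "x \<in> threads P p A \<union> threads P p B"
  proof (cases "\<forall>k. x k \<in> A k")
    case False
    then obtain i where i: "x i \<notin> A i" by blast
    have "x k \<in> B k" for k
    proof -
      have "x (max i k) \<notin> A (max i k)"
        using i Olat_limit_mem[OF A xl, of "max i k" i] by auto
      then show ?thesis
        using xAB[of "max i k"] Olat_limit_mem[OF B xl, of "max i k" k] by auto
    qed
    then show ?thesis unfolding threads_def using xl by blast
  qed (use xl in \<open>auto simp: threads_def\<close>)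
qed (auto simp: threads_def)

lemma threads_down_map:
  "x \<in> lim \<Longrightarrow> threads P p (down_map P le x) = {y \<in> lim. lim_le le y x}"
  unfolding threads_def down_map_def down_def lim_le_def using limit_mem by auto

end

section \<open>The induced map on \<open>\<bbbO>\<close>\<close>

lemma topspace_lim_top: "topspace (lim_top P p) = inv_limit P p"
  unfolding lim_top_def inv_limit_def by (auto simp: PiE_UNIV_domain)

lemma topspace_Olat_top: "topspace (Olat_top P le p) = Olat P le p"
  unfolding Olat_top_def Olat_def by (auto simp: PiE_UNIV_domain)

locale limit_quotient =
  P: finite_poset_system P leP p + H: finite_poset_system H leH h
  for P :: "nat \<Rightarrow> 'a set" and leP p and H :: "nat \<Rightarrow> 'b set" and leH h +
  fixes f :: "(nat \<Rightarrow> 'a) \<Rightarrow> (nat \<Rightarrow> 'b)"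
  assumes f_quotient: "poset_quotient (inv_limit P p) (lim_le leP) (inv_limit H h) (lim_le leH) f"
    and f_continuous: "continuous_map (lim_top P p) (lim_top H h) f"
begin

lemma f_image: "f ` P.lim = H.lim"
  using f_quotient unfolding poset_quotient_def by blast

lemma f_mem: "x \<in> P.lim \<Longrightarrow> f x \<in> H.lim"
  using f_image by blast

lemma f_mono: "x \<in> P.lim \<Longrightarrow> y \<in> P.lim \<Longrightarrow> lim_le leP x y \<Longrightarrow> lim_le leH (f x) (f y)"
  using f_quotient unfolding poset_quotient_def by blast

lemma f_locally_constant:
  assumes z: "z \<in> P.lim"
  shows "\<exists>m. \<forall>w\<in>P.lim. w m = z m \<longrightarrow> f w n = f z n"
proof -
  define XH where "XH = product_topology (\<lambda>n. discrete_topology (H n)) UNIV"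
  define XP where "XP = product_topology (\<lambda>n. discrete_topology (P n)) UNIV"
  define V where "V = {u \<in> topspace XH. u n \<in> {f z n}}"
  have "f z n \<in> H n" using H.limit_mem[OF f_mem[OF z]] .
  then have "openin XH V" unfolding V_def XH_def
    by (intro openin_continuous_map_preimage[OF continuous_map_product_projection]) auto
  then have "openin (lim_top H h) (V \<inter> H.lim)"
    unfolding lim_top_def XH_def openin_subtopology by blast
  then have "openin (lim_top P p) {x \<in> topspace (lim_top P p). f x \<in> V \<inter> H.lim}"
    by (rule openin_continuous_map_preimage[OF f_continuous])
  then obtain T where T: "openin XP T" and T_eq: "{x \<in> topspace (lim_top P p). f x \<in> V \<inter> H.lim} = T \<inter> P.lim"
    unfolding lim_top_def XP_def openin_subtopology by blast
  have "z \<in> T"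
    using T_eq z f_mem[OF z] H.limit_mem unfolding V_def XH_def topspace_lim_top
    by (auto simp: PiE_UNIV_domain)
  then obtain U where U: "finite {i. U i \<noteq> P i}" "z \<in> Pi\<^sub>E UNIV U" "Pi\<^sub>E UNIV U \<subseteq> T"
    using T unfolding XP_def openin_product_topology_alt by auto
  then obtain m where m: "{i. U i \<noteq> P i} \<subseteq> {..<m}"
    using finite_nat_iff_bounded by blast
  have "f w n = f z n" if w: "w \<in> P.lim" "w m = z m" for w
  proof -
    have "w i \<in> U i" for i
    proof (cases "U i = P i")
      case False
      then have "i \<le> m" using m by auto
      then have "w i = z i" using P.limit_proj[OF w(1), of i m] P.limit_proj[OF z, of i m] w(2) by simp
      then show ?thesis using U(2) by (simp add: PiE_UNIV_domain Pi_iff)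
    qed (use P.limit_mem[OF w(1)] in simp)
    then have "w \<in> T" using U(3) by (auto simp: PiE_UNIV_domain)
    then show ?thesis using T_eq w(1) unfolding V_def by blast
  qed
  then show ?thesis by blast
qed

text \<open>Uniform version, by compactness of the limit: the threads along which two points
  agreeing at level \<open>m\<close> are separated by \<open>f\<close> at level \<open>n\<close>, for ever larger \<open>m\<close>, would
  accumulate at a point where \<open>f\<close> is not locally constant.\<close>

lemma f_uniformly_locally_constant: "\<exists>m. \<forall>x\<in>P.lim. \<forall>w\<in>P.lim. x m = w m \<longrightarrow> f x n = f w n"
proof (rule ccontr)
  assume not_uniform: "\<not> ?thesis"
  define Q where "Q k = {c \<in> P k. \<exists>m\<ge>k. \<exists>x\<in>P.lim. \<exists>w\<in>P.lim. x m = w m \<and> f x n \<noteq> f w n \<and> x k = c}" for k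
  have "Q k \<subseteq> P (0 + k)" for k
    unfolding Q_def by auto
  moreover have "Q k \<noteq> {}" for k
  proof -
    obtain x w where "x \<in> P.lim" "w \<in> P.lim" "x k = w k" "f x n \<noteq> f w n"
      using not_uniform by blast
    then have "x k \<in> Q k" unfolding Q_def using P.limit_mem by blast
    then show ?thesis by blast
  qed
  moreover have "p (Suc (0 + k)) (0 + k) c \<in> Q k" if "c \<in> Q (Suc k)" for k c
  proof -
    have "\<exists>m\<ge>Suc k. \<exists>x\<in>P.lim. \<exists>w\<in>P.lim. x m = w m \<and> f x n \<noteq> f w n \<and> x (Suc k) = c"
      using that unfolding Q_def by auto
    then obtain m x w where mx: "m \<ge> Suc k" "x \<in> P.lim" "w \<in> P.lim" "x m = w m" "f x n \<noteq> f w n" "x (Suc k) = c"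
      by blast
    then have "x k \<in> Q k"
      unfolding Q_def using P.limit_mem[OF mx(2), of k] by (auto intro!: exI[of _ m])
    then show ?thesis using P.limit_bond[OF mx(2), of k] mx(6) by simp
  qed
  ultimately obtain z where z: "z \<in> P.lim" "\<forall>k. z (0 + k) \<in> Q k"
    using P.limit_point_from_level[of Q 0] by blast
  obtain m0 where m0: "\<forall>w\<in>P.lim. w m0 = z m0 \<longrightarrow> f w n = f z n"
    using f_locally_constant[OF z(1)] by blast
  have "z m0 \<in> Q m0" using z(2) by simp
  then obtain m x w where mx: "m \<ge> m0" "x \<in> P.lim" "w \<in> P.lim" "x m = w m" "f x n \<noteq> f w n" "x m0 = z m0"
    unfolding Q_def by blast
  have "w m0 = x m0" using P.limit_proj[OF mx(2) mx(1)] P.limit_proj[OF mx(3) mx(1)] mx(4) by simp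
  then show False using m0 mx by auto
qed

definition q :: "(nat \<Rightarrow> 'a set) \<Rightarrow> (nat \<Rightarrow> 'b set)" where
  "q A = shadow H leH (f ` threads P p A)"

definition q_section :: "(nat \<Rightarrow> 'b set) \<Rightarrow> (nat \<Rightarrow> 'a set)" where
  "q_section D = shadow P leP {x \<in> P.lim. f x \<in> threads H h D}"

lemma q_in_Olat: "q A \<in> Olat H leH h"
  unfolding q_def by (rule H.shadow_in_Olat) (auto simp: threads_def intro: f_mem)

lemma q_section_in_Olat: "q_section D \<in> Olat P leP p"
  unfolding q_section_def by (rule P.shadow_in_Olat) auto

lemma threads_q_section:
  assumes D: "D \<in> Olat H leH h"
  shows "threads P p (q_section D) = {x \<in> P.lim. f x \<in> threads H h D}"
  unfolding q_section_def
proof (rule P.threads_shadow)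
  fix z y assume z: "z \<in> P.lim" and y: "y \<in> {x \<in> P.lim. f x \<in> threads H h D}" and zy: "lim_le leP z y"
  have yl: "y \<in> P.lim" and fy: "\<And>k. f y k \<in> D k"
    using y unfolding threads_def by auto
  have "leH k (f z k) (f y k)" for k
    using f_mono[OF z yl zy] unfolding lim_le_def by blast
  then have "f z k \<in> D k" for k
    using H.Olat_down_closed[OF D fy H.limit_mem[OF f_mem[OF z]]] by blast
  then show "z \<in> {x \<in> P.lim. f x \<in> threads H h D}"
    unfolding threads_def using z f_mem[OF z] by blast
next
  fix z assume z: "z \<in> P.lim" and closed: "\<And>m. \<exists>y\<in>{x \<in> P.lim. f x \<in> threads H h D}. y m = z m"
  have "f z k \<in> D k" for k
  proof -
    obtain m where m: "\<forall>w\<in>P.lim. w m = z m \<longrightarrow> f w k = f z k"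
      using f_locally_constant[OF z] by blast
    obtain y where y: "y \<in> P.lim" "f y \<in> threads H h D" "y m = z m"
      using closed[of m] by blast
    have "f y k \<in> D k" using y(2) unfolding threads_def by blast
    moreover have "f y k = f z k" using m y(1,3) by blast
    ultimately show ?thesis by simp
  qed
  then show "z \<in> {x \<in> P.lim. f x \<in> threads H h D}"
    unfolding threads_def using z f_mem[OF z] by blast
qed auto

lemma q_q_section:
  assumes D: "D \<in> Olat H leH h"
  shows "q (q_section D) = D"
proof -
  have "f ` {x \<in> P.lim. f x \<in> threads H h D} = threads H h D"
    using f_image unfolding threads_def by auto
  then show ?thesis
    unfolding q_def threads_q_section[OF D] using H.shadow_threads[OF D] by simp
qed

lemma q_mono: "Olat_le A B \<Longrightarrow> Olat_le (q A) (q B)"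
  unfolding Olat_le_def q_def by (intro allI shadow_mono image_mono threads_mono) blast

lemma q_section_mono: "Olat_le D E \<Longrightarrow> Olat_le (q_section D) (q_section E)"
  unfolding Olat_le_def q_section_def
  by (intro allI shadow_mono) (use threads_mono[of D E H h] in blast)

lemma q_quotient: "poset_quotient (Olat P leP p) Olat_le (Olat H leH h) Olat_le q"
  unfolding poset_quotient_def
proof (intro conjI ballI impI)
  have "D \<in> q ` Olat P leP p" if "D \<in> Olat H leH h" for D
    using image_eqI[where f=q, OF q_q_section[OF that, symmetric] q_section_in_Olat] .
  then show "q ` Olat P leP p = Olat H leH h"
    using q_in_Olat by blast
next
  fix D E assume "D \<in> Olat H leH h" "E \<in> Olat H leH h" "Olat_le D E"
  then show "\<exists>A\<in>Olat P leP p. \<exists>B\<in>Olat P leP p. Olat_le A B \<and> q A = D \<and> q B = E"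
    using q_section_in_Olat q_section_mono q_q_section by blast
qed (rule q_mono)

lemma q_Un: "A \<in> Olat P leP p \<Longrightarrow> B \<in> Olat P leP p \<Longrightarrow> q (\<lambda>n. A n \<union> B n) = (\<lambda>n. q A n \<union> q B n)"
  unfolding q_def P.threads_Un image_Un shadow_def by auto

lemma q_down_map:
  assumes x: "x \<in> P.lim"
  shows "q (down_map P leP x) = down_map H leH (f x)"
proof -
  have "b \<in> down (H n) (leH n) (f x n)" if "b \<in> H n" "leH n b (f y n)" "y \<in> P.lim" "lim_le leP y x" for b n y
  proof -
    have "leH n (f y n) (f x n)"
      using f_mono[OF that(3) x that(4)] unfolding lim_le_def by blast
    then show ?thesis
      unfolding down_def using that(1,2) H.le_trans H.limit_mem f_mem x that(3) by blast
  qed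
  moreover have "lim_le leP x x"
    unfolding lim_le_def using P.le_refl P.limit_mem[OF x] by blast
  moreover have "q (down_map P leP x) = shadow H leH (f ` {y \<in> P.lim. lim_le leP y x})"
    unfolding q_def P.threads_down_map[OF x] ..
  ultimately show ?thesis
    unfolding shadow_def down_map_def using x by (auto simp: down_def)
qed

lemma q_level:
  assumes m: "\<forall>x\<in>P.lim. \<forall>w\<in>P.lim. x m = w m \<longrightarrow> f x n = f w n" and A: "A \<in> Olat P leP p"
  shows "q A n = {b \<in> H n. \<exists>x\<in>P.lim. x m \<in> A m \<and> leH n b (f x n)}"
proof (intro equalityI subsetI)
  fix b assume "b \<in> q A n"
  then show "b \<in> {b \<in> H n. \<exists>x\<in>P.lim. x m \<in> A m \<and> leH n b (f x n)}"
    unfolding q_def shadow_def threads_def by auto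
next
  fix b assume "b \<in> {b \<in> H n. \<exists>x\<in>P.lim. x m \<in> A m \<and> leH n b (f x n)}"
  then obtain x where bH: "b \<in> H n" and x: "x \<in> P.lim" "x m \<in> A m" "leH n b (f x n)" by blast
  obtain x' where x': "x' \<in> threads P p A" "leP m (x m) (x' m)"
    using P.Olat_threads_above[OF A x(2)] by blast
  have x'l: "x' \<in> P.lim" using x'(1) unfolding threads_def by blast
  obtain u v where uv: "u \<in> P.lim" "v \<in> P.lim" "u m = x m" "v m = x' m" "lim_le leP u v"
    using P.limit_le_through[OF P.limit_mem[OF x(1)] P.limit_mem[OF x'l] x'(2)] by blast
  have "leH n (f u n) (f v n)" using f_mono[OF uv(1,2,5)] unfolding lim_le_def by blast
  moreover have "f u n = f x n" using m uv(1,3) x(1) by blast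
  moreover have "f v n = f x' n" using m uv(2,4) x'l by blast
  ultimately have "leH n b (f x' n)"
    using H.le_trans[OF bH H.limit_mem[OF f_mem[OF x(1)]] H.limit_mem[OF f_mem[OF x'l]] x(3)] by simp
  then show "b \<in> q A n" unfolding q_def shadow_def using bH x'(1) by blast
qed

lemma q_continuous: "continuous_map (Olat_top P leP p) (Olat_top H leH h) q"
proof -
  have "continuous_map (Olat_top P leP p) (discrete_topology (downsets (H n) (leH n))) (\<lambda>A. q A n)" for n
  proof -
    obtain m where m: "\<forall>x\<in>P.lim. \<forall>w\<in>P.lim. x m = w m \<longrightarrow> f x n = f w n"
      using f_uniformly_locally_constant by blast
    define G where "G X = {b \<in> H n. \<exists>x\<in>P.lim. x m \<in> X \<and> leH n b (f x n)}" for X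
    have "continuous_map (Olat_top P leP p) (discrete_topology (downsets (P m) (leP m))) (\<lambda>A. A m)"
      unfolding Olat_top_def
      by (intro continuous_map_from_subtopology continuous_map_product_projection) simp
    moreover have "G X \<in> downsets (H n) (leH n)" for X
    proof -
      have "leH n c (f x n)" if "c \<in> H n" "b \<in> H n" "leH n c b" "x \<in> P.lim" "leH n b (f x n)" for b c x
        using H.le_trans[OF that(1,2) H.limit_mem[OF f_mem[OF that(4)]] that(3,5)] .
      then show ?thesis unfolding downsets_def G_def by blast
    qed
    then have "continuous_map (discrete_topology (downsets (P m) (leP m)))
        (discrete_topology (downsets (H n) (leH n))) G"
      by simp
    ultimately have "continuous_map (Olat_top P leP p) (discrete_topology (downsets (H n) (leH n))) (G \<circ> (\<lambda>A. A m))"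
      by (rule continuous_map_compose)
    then show ?thesis
      by (rule continuous_map_eq) (simp add: topspace_Olat_top q_level[OF m] G_def)
  qed
  then have "continuous_map (Olat_top P leP p) (product_topology (\<lambda>n. discrete_topology (downsets (H n) (leH n))) UNIV) q"
    by (simp add: continuous_map_componentwise_UNIV)
  then show ?thesis
    unfolding Olat_top_def[of H leH h] using q_in_Olat by (intro continuous_map_into_subtopology) auto
qed

end

theorem mainTheorem17:
  fixes P :: "nat \<Rightarrow> 'a set" and leP :: "nat \<Rightarrow> 'a \<Rightarrow> 'a \<Rightarrow> bool" and p :: "nat \<Rightarrow> nat \<Rightarrow> 'a \<Rightarrow> 'a"
    and H :: "nat \<Rightarrow> 'b set" and leH :: "nat \<Rightarrow> 'b \<Rightarrow> 'b \<Rightarrow> bool" and h :: "nat \<Rightarrow> nat \<Rightarrow> 'b \<Rightarrow> 'b"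
    and f :: "(nat \<Rightarrow> 'a) \<Rightarrow> (nat \<Rightarrow> 'b)"
  assumes H_sys: "inv_system H leH h"
    and P_fraisse: "fraisse_seq P leP p"
    and f_quot: "poset_quotient (inv_limit P p) (lim_le leP) (inv_limit H h) (lim_le leH) f"
    and f_cont: "continuous_map (lim_top P p) (lim_top H h) f"
  shows "\<exists>q. poset_quotient (Olat P leP p) Olat_le (Olat H leH h) Olat_le q \<and>
             continuous_map (Olat_top P leP p) (Olat_top H leH h) q \<and>
             (\<forall>A\<in>Olat P leP p. \<forall>B\<in>Olat P leP p. q (\<lambda>n. A n \<union> B n) = (\<lambda>n. q A n \<union> q B n)) \<and>
             (\<forall>x\<in>inv_limit P p. q (down_map P leP x) = down_map H leH (f x))"
proof -
  have "inv_system P leP p"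
    using P_fraisse unfolding fraisse_seq_def by blast
  then interpret limit_quotient P leP p H leH h f
    using H_sys f_quot f_cont by unfold_locales
  show ?thesis
    using q_quotient q_continuous q_Un q_down_map by blast
qed

end
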